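(* Let $n\ge 2$ and $N\ge 2$ be integers, and let $C=\{\boldsymbol{x}_1,\ldots,\boldsymbol{x}_N\}\subset\mathbb{S}^{n-1}$ be a set of $N$ distinct points on the unit sphere of $\mathbb{R}^n$. Put $$d_C:=\min_{1\le i<j\le N}\|\boldsymbol{x}_i-\boldsymbol{x}_j\|_2,\qquad t_C:=\max_{1\le i<j\le N}\boldsymbol{x}_i\cdot\boldsymbol{x}_j .$$ Suppose that: (i) there exist a nonnegative integer $k_1$ and a function $f\in P(k_1,t_C,n)$ such that $N=f^{\#}$; (ii) there exists $t_2\in[-1,t_C)$ such that $f(t)\neq 0$ for all $t\in(t_2,t_C)$; (iii) there exist a nonnegative integer $K_2$ and a function $g\in P(K_2,t_2,n)$ such that $N>g^{\#}$. Then $C$ is a solution of the Tammes problem for $n$ and $N$, that is, $$d_{n,N}=d_C,$$ where $d_{n,N}:=\max\left\{\min_{1\le i<j\le N}\|\boldsymbol{y}_i-\boldsymbol{y}_j\|_2 : \boldsymbol{y}_1,\ldots,\boldsymbol{y}_N\in\mathbb{S}^{n-1}\right\}$.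
   Context: $\mathbb{S}^{n-1}$ denotes the unit sphere in $\mathbb{R}^n$ and $\boldsymbol{x}\cdot\boldsymbol{y}$ the standard inner product. For fixed $n$, the Gegenbauer polynomials $P_k^{(n)}$ are defined by $P_0^{(n)}(t)=1$, $P_1^{(n)}(t)=t$, and for $k\ge 1$ $$P_{k+1}^{(n)}(t)=\frac{(2k+n-2)\,t\,P_k^{(n)}(t)-k\,P_{k-1}^{(n)}(t)}{k+n-2}.$$ For an integer $k\ge 0$ and $\tau\in[-1,1)$, the set $P(k,\tau,n)$ consists of all functions $f$ such that (a) $f(t)=\sum_{i=0}^{k}c_iP_i^{(n)}(t)$ with real coefficients satisfying $c_0>0$ and $c_i\ge 0$ for $i=1,\ldots,k$, and (b) $f(t)\le 0$ for all $t\in[-1,\tau]$. For such $f$ (with this expansion), $f^{\#}:=f(1)/c_0$. *)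

theory Defs
  imports "HOL-Analysis.Analysis"
begin

fun gegen :: "nat \<Rightarrow> nat \<Rightarrow> real \<Rightarrow> real" where
  "gegen n 0 t = 1"
| "gegen n (Suc 0) t = t"
| "gegen n (Suc (Suc k)) t =
     ((2 * real (Suc k) + real n - 2) * t * gegen n (Suc k) t - real (Suc k) * gegen n k t)
       / (real (Suc k) + real n - 2)"

definition gpoly :: "nat \<Rightarrow> nat \<Rightarrow> (nat \<Rightarrow> real) \<Rightarrow> real \<Rightarrow> real" where
  "gpoly n k c t = (\<Sum>i\<le>k. c i * gegen n i t)"

definition inP :: "nat \<Rightarrow> real \<Rightarrow> nat \<Rightarrow> (nat \<Rightarrow> real) \<Rightarrow> bool" where
  "inP k \<tau> n c \<longleftrightarrow> -1 \<le> \<tau> \<and> \<tau> < 1 \<and> c 0 > 0 \<and> (\<forall>i\<in>{1..k}. c i \<ge> 0)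
     \<and> (\<forall>t\<in>{-1..\<tau>}. gpoly n k c t \<le> 0)"

definition fsharp :: "nat \<Rightarrow> nat \<Rightarrow> (nat \<Rightarrow> real) \<Rightarrow> real" where
  "fsharp n k c = gpoly n k c 1 / c 0"

definition minDist :: "('a::real_inner) set \<Rightarrow> real" where
  "minDist C = Min {dist x y | x y. x \<in> C \<and> y \<in> C \<and> x \<noteq> y}"

definition maxInner :: "('a::real_inner) set \<Rightarrow> real" where
  "maxInner C = Max {x \<bullet> y | x y. x \<in> C \<and> y \<in> C \<and> x \<noteq> y}"

text \<open>Tammes number d_{n,N} for the sphere in real^'n: the maximum (supremum, attained by
compactness) over all N-tuples of points on the unit sphere of their minimal pairwise distance.\<close>
definition tammes_d :: "'n::finite itself \<Rightarrow> nat \<Rightarrow> real" where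
  "tammes_d _ N = Sup {Min {dist (y i) (y j) | i j. i < j \<and> j < N} | y :: nat \<Rightarrow> real^'n.
                        \<forall>i<N. y i \<in> sphere 0 1}"

end

theory Submission
  imports Defs "HOL-Library.Multiset"
begin

(* Delsarte's linear programming bound. If y_1, ..., y_N are unit vectors and
   f = c_0 P_0 + ... + c_k P_k with all c_i \<ge> 0, then positive definiteness of the Gegenbauer
   polynomials gives  sum_{i,j} f(y_i.y_j) \<ge> c_0 N^2,  while the diagonal contributes N f(1).
   Suppose some configuration of N points had minimal distance larger than d_C, i.e. all
   inner products below t_C. Then f \<le> 0 off the diagonal and f(1) = N c_0 force
   f(y_i.y_j) = 0 for i \<noteq> j, so by (ii) all inner products are at most t_2; the same
   inequality for g then gives N \<le> g^#, contradicting (iii).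

   Positive definiteness of P_m comes from the Fischer inner product
   <p, q> = sum_a a! p_a q_a on homogeneous polynomials of degree m, for which
   multiplication by X_i is adjoint to the partial derivative d_i. The zonal harmonic Z_x of
   degree m (built from the three-term recurrence) is harmonic, satisfies Z_x(y) = P_m(x.y)
   for unit y, and Z_y = A_m <y,X>^m + |X|^2 R with A_m > 0 independent of y. Hence
   <Z_x, Z_y> = A_m m! P_m(x.y), and sum_{i,j} P_m(y_i.y_j) is a positive multiple of
   |sum_i Z_{y_i}|^2. *)

section \<open>Polynomials as coefficient functions\<close>

text \<open>A polynomial in the variables of type \<^typ>\<open>'v\<close> is given by its coefficient function
  on monomials, the monomial \<open>\<Prod>i. X\<^sub>i ^ count a i\<close> being encoded by the multiset \<open>a\<close>.\<close>

type_synonym 'v mpoly = "'v multiset \<Rightarrow> real"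

definition mult_var :: "'v \<Rightarrow> 'v mpoly \<Rightarrow> 'v mpoly" where
  "mult_var i p = (\<lambda>a. if i \<in># a then p (a - {#i#}) else 0)"

definition deriv_var :: "'v \<Rightarrow> 'v mpoly \<Rightarrow> 'v mpoly" where
  "deriv_var i p = (\<lambda>a. real (count a i + 1) * p (add_mset i a))"

lemma deriv_var_mult_var:
  "deriv_var i (mult_var j p) = (\<lambda>a. mult_var j (deriv_var i p) a + (if i = j then p a else 0))"
proof
  fix a
  show "deriv_var i (mult_var j p) a = mult_var j (deriv_var i p) a + (if i = j then p a else 0)"
  proof (cases "j \<in># a")
    case True
    then obtain b where b: "a = add_mset j b" by (metis multi_member_split)
    show ?thesis
      by (cases "i = j") (auto simp: deriv_var_def mult_var_def b add_mset_commute algebra_simps)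
  next
    case False
    then show ?thesis
      by (cases "i = j") (auto simp: deriv_var_def mult_var_def add_mset_commute algebra_simps)
  qed
qed

lemma mult_var_commute: "mult_var i (mult_var j p) = mult_var j (mult_var i p)"
proof
  fix a
  show "mult_var i (mult_var j p) a = mult_var j (mult_var i p) a"
    by (cases "i = j")
       (auto simp: mult_var_def in_diff_count diff_right_commute add_mset_commute)
qed

lemma mult_var_sum: "mult_var i (\<lambda>a. \<Sum>j\<in>A. f j a) = (\<lambda>a. \<Sum>j\<in>A. mult_var i (f j) a)"
  by (auto simp: mult_var_def)
lemma mult_var_scale: "mult_var i (\<lambda>a. u * f a) = (\<lambda>a. u * mult_var i f a)"
  by (auto simp: mult_var_def)
lemma mult_var_add: "mult_var i (\<lambda>a. f a + g a) = (\<lambda>a. mult_var i f a + mult_var i g a)"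
  by (auto simp: mult_var_def)
lemma mult_var_diff: "mult_var i (\<lambda>a. f a - g a) = (\<lambda>a. mult_var i f a - mult_var i g a)"
  by (auto simp: mult_var_def)
lemma mult_var_zero: "mult_var i (\<lambda>a. 0) = (\<lambda>a. 0)"
  by (auto simp: mult_var_def)

lemma deriv_var_sum: "deriv_var i (\<lambda>a. \<Sum>j\<in>A. f j a) = (\<lambda>a. \<Sum>j\<in>A. deriv_var i (f j) a)"
  by (auto simp: deriv_var_def sum_distrib_left)
lemma deriv_var_scale: "deriv_var i (\<lambda>a. u * f a) = (\<lambda>a. u * deriv_var i f a)"
  by (auto simp: deriv_var_def algebra_simps)
lemma deriv_var_add: "deriv_var i (\<lambda>a. f a + g a) = (\<lambda>a. deriv_var i f a + deriv_var i g a)"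
  by (auto simp: deriv_var_def algebra_simps)
lemma deriv_var_diff: "deriv_var i (\<lambda>a. f a - g a) = (\<lambda>a. deriv_var i f a - deriv_var i g a)"
  by (auto simp: deriv_var_def algebra_simps)
lemma deriv_var_zero: "deriv_var i (\<lambda>a. 0) = (\<lambda>a. 0)"
  by (auto simp: deriv_var_def)

lemmas mult_var_linear = mult_var_sum mult_var_scale mult_var_add mult_var_diff mult_var_zero
lemmas deriv_var_linear = deriv_var_sum deriv_var_scale deriv_var_add deriv_var_diff deriv_var_zero

definition const_one :: "'v mpoly" where
  "const_one = (\<lambda>a. if a = {#} then 1 else 0)"

lemma deriv_var_const_one: "deriv_var i const_one = (\<lambda>a. 0)"
  by (auto simp: deriv_var_def const_one_def)

definition homogeneous :: "nat \<Rightarrow> 'v mpoly \<Rightarrow> bool" where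
  "homogeneous k p \<longleftrightarrow> (\<forall>a. size a \<noteq> k \<longrightarrow> p a = 0)"

lemma homogeneous_mult_var:
  fixes p :: "'v mpoly"
  assumes "homogeneous k p" shows "homogeneous (Suc k) (mult_var i p)"
  unfolding homogeneous_def
proof (intro allI impI)
  fix a :: "'v multiset" assume "size a \<noteq> Suc k"
  then show "mult_var i p a = 0"
  proof (cases "i \<in># a")
    case True
    then obtain b where "a = add_mset i b" by (metis multi_member_split)
    with \<open>size a \<noteq> Suc k\<close> show ?thesis using assms by (auto simp: homogeneous_def mult_var_def)
  qed (simp add: mult_var_def)
qed

lemma homogeneous_const_one: "homogeneous 0 const_one"
  by (auto simp: homogeneous_def const_one_def)

lemma size_eq_sum_count: "size (a :: 'v::finite multiset) = (\<Sum>i\<in>UNIV. count a i)"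
proof (induction a)
  case (add x a)
  have "(\<Sum>i\<in>UNIV. count (add_mset x a) i) = (\<Sum>i\<in>UNIV. count a i + (if i = x then 1 else 0))"
    by (rule sum.cong) auto
  then show ?case using add by (simp add: sum.distrib)
qed simp

definition mult_lin :: "real^'v \<Rightarrow> 'v::finite mpoly \<Rightarrow> 'v mpoly" where
  "mult_lin x p = (\<lambda>a. \<Sum>i\<in>UNIV. x$i * mult_var i p a)"

definition dir_deriv :: "real^'v \<Rightarrow> 'v::finite mpoly \<Rightarrow> 'v mpoly" where
  "dir_deriv x p = (\<lambda>a. \<Sum>i\<in>UNIV. x$i * deriv_var i p a)"

definition mult_sqnorm :: "'v::finite mpoly \<Rightarrow> 'v mpoly" where
  "mult_sqnorm p = (\<lambda>a. \<Sum>i\<in>UNIV. mult_var i (mult_var i p) a)"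

definition laplacian :: "'v::finite mpoly \<Rightarrow> 'v mpoly" where
  "laplacian p = (\<lambda>a. \<Sum>i\<in>UNIV. deriv_var i (deriv_var i p) a)"

lemma mult_lin_lincomb:
  "mult_lin x (\<lambda>a. u * f a + v * g a) = (\<lambda>a. u * mult_lin x f a + v * mult_lin x g a)"
  by (simp add: mult_lin_def mult_var_linear sum_distrib_left sum.distrib algebra_simps)
lemma dir_deriv_lincomb:
  "dir_deriv x (\<lambda>a. u * f a - v * g a) = (\<lambda>a. u * dir_deriv x f a - v * dir_deriv x g a)"
  by (simp add: dir_deriv_def deriv_var_linear sum_distrib_left sum_subtractf algebra_simps)
lemma mult_sqnorm_lincomb:
  "mult_sqnorm (\<lambda>a. u * f a - v * g a) = (\<lambda>a. u * mult_sqnorm f a - v * mult_sqnorm g a)"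
  by (simp add: mult_sqnorm_def mult_var_linear sum_distrib_left sum_subtractf algebra_simps)
lemma laplacian_lincomb:
  "laplacian (\<lambda>a. u * f a - v * g a) = (\<lambda>a. u * laplacian f a - v * laplacian g a)"
  by (simp add: laplacian_def deriv_var_linear sum_distrib_left sum_subtractf algebra_simps)
lemma mult_lin_scale: "mult_lin x (\<lambda>a. u * f a) = (\<lambda>a. u * mult_lin x f a)"
  by (simp add: mult_lin_def mult_var_scale sum_distrib_left algebra_simps)
lemma mult_sqnorm_scale: "mult_sqnorm (\<lambda>a. u * f a) = (\<lambda>a. u * mult_sqnorm f a)"
  by (simp add: mult_sqnorm_def mult_var_scale sum_distrib_left)
lemma mult_lin_zero: "mult_lin x (\<lambda>a. 0) = (\<lambda>a. 0)"
  by (simp add: mult_lin_def mult_var_zero)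
lemma mult_sqnorm_zero: "mult_sqnorm (\<lambda>a. 0) = (\<lambda>a. 0)"
  by (simp add: mult_sqnorm_def mult_var_zero)

lemma dir_deriv_const_one: "dir_deriv x const_one = (\<lambda>a. 0)"
  by (simp add: dir_deriv_def deriv_var_const_one)
lemma laplacian_const_one: "laplacian const_one = (\<lambda>a. 0)"
  by (simp add: laplacian_def deriv_var_const_one deriv_var_zero)

lemma homogeneous_mult_lin: "homogeneous k p \<Longrightarrow> homogeneous (Suc k) (mult_lin x p)"
  using homogeneous_mult_var[of k p] by (auto simp: homogeneous_def mult_lin_def)
lemma homogeneous_mult_sqnorm:
  assumes "homogeneous k p" shows "homogeneous (Suc (Suc k)) (mult_sqnorm p)"
proof -
  have "homogeneous (Suc (Suc k)) (mult_var i (mult_var i p))" for i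
    by (intro homogeneous_mult_var assms)
  then show ?thesis by (auto simp: homogeneous_def mult_sqnorm_def)
qed

lemma mult_lin_mult_sqnorm: "mult_lin x (mult_sqnorm p) = mult_sqnorm (mult_lin x p)"
proof
  fix a
  have "mult_var i (mult_var j (mult_var j p)) = mult_var j (mult_var j (mult_var i p))" for i j
    by (metis mult_var_commute)
  then show "mult_lin x (mult_sqnorm p) a = mult_sqnorm (mult_lin x p) a"
    unfolding mult_lin_def mult_sqnorm_def mult_var_sum mult_var_scale sum_distrib_left
    by (subst sum.swap) simp
qed

lemma deriv_var_mult_lin:
  "deriv_var i (mult_lin x p) = (\<lambda>a. mult_lin x (deriv_var i p) a + x$i * p a)"
proof
  fix a
  have "deriv_var i (mult_lin x p) a
      = mult_lin x (deriv_var i p) a + (\<Sum>j\<in>UNIV. x$j * (if i = j then p a else 0))"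
    by (simp add: mult_lin_def deriv_var_linear deriv_var_mult_var distrib_left sum.distrib)
  then show "deriv_var i (mult_lin x p) a = mult_lin x (deriv_var i p) a + x$i * p a"
    by (simp add: if_distrib cong: if_cong)
qed

lemma deriv_var_mult_sqnorm:
  "deriv_var i (mult_sqnorm p) = (\<lambda>a. mult_sqnorm (deriv_var i p) a + 2 * mult_var i p a)"
proof
  fix a
  have "deriv_var i (mult_var j (mult_var j p)) a
      = mult_var j (mult_var j (deriv_var i p)) a + (if j = i then 2 * mult_var i p a else 0)" for j
    by (cases "i = j") (simp_all add: deriv_var_mult_var mult_var_add)
  then show "deriv_var i (mult_sqnorm p) a = mult_sqnorm (deriv_var i p) a + 2 * mult_var i p a"
    by (simp add: mult_sqnorm_def deriv_var_sum sum.distrib)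
qed

lemma dir_deriv_mult_lin:
  "dir_deriv y (mult_lin x p) = (\<lambda>a. (x \<bullet> y) * p a + mult_lin x (dir_deriv y p) a)"
proof
  fix a
  have "dir_deriv y (mult_lin x p) a
      = (\<Sum>i\<in>UNIV. y$i * mult_lin x (deriv_var i p) a) + (\<Sum>i\<in>UNIV. x$i * y$i * p a)"
    by (simp add: dir_deriv_def deriv_var_mult_lin distrib_left sum.distrib mult_ac)
  also have "(\<Sum>i\<in>UNIV. y$i * mult_lin x (deriv_var i p) a) = mult_lin x (dir_deriv y p) a"
    unfolding mult_lin_def dir_deriv_def mult_var_sum mult_var_scale sum_distrib_left
    by (subst sum.swap) (simp add: mult.left_commute)
  also have "(\<Sum>i\<in>UNIV. x$i * y$i * p a) = (x \<bullet> y) * p a"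
    by (simp add: inner_vec_def sum_distrib_right)
  finally show "dir_deriv y (mult_lin x p) a = (x \<bullet> y) * p a + mult_lin x (dir_deriv y p) a"
    by simp
qed

lemma dir_deriv_mult_sqnorm:
  "dir_deriv x (mult_sqnorm p) = (\<lambda>a. 2 * mult_lin x p a + mult_sqnorm (dir_deriv x p) a)"
proof
  fix a
  have "dir_deriv x (mult_sqnorm p) a
      = (\<Sum>i\<in>UNIV. x$i * mult_sqnorm (deriv_var i p) a) + 2 * mult_lin x p a"
    by (simp add: dir_deriv_def deriv_var_mult_sqnorm distrib_left sum.distrib mult_lin_def
        sum_distrib_left mult.left_commute)
  also have "(\<Sum>i\<in>UNIV. x$i * mult_sqnorm (deriv_var i p) a) = mult_sqnorm (dir_deriv x p) a"
    unfolding mult_sqnorm_def dir_deriv_def mult_var_sum mult_var_scale sum_distrib_left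
    by (subst sum.swap) simp
  finally show "dir_deriv x (mult_sqnorm p) a = 2 * mult_lin x p a + mult_sqnorm (dir_deriv x p) a"
    by simp
qed

lemma laplacian_mult_lin:
  "laplacian (mult_lin x p) = (\<lambda>a. 2 * dir_deriv x p a + mult_lin x (laplacian p) a)"
proof
  fix a
  have "laplacian (mult_lin x p) a
      = (\<Sum>i\<in>UNIV. mult_lin x (deriv_var i (deriv_var i p)) a) + 2 * dir_deriv x p a"
    by (simp add: laplacian_def deriv_var_mult_lin deriv_var_add deriv_var_scale sum.distrib
        dir_deriv_def sum_distrib_left)
  also have "(\<Sum>i\<in>UNIV. mult_lin x (deriv_var i (deriv_var i p)) a) = mult_lin x (laplacian p) a"
    unfolding mult_lin_def laplacian_def mult_var_sum sum_distrib_left by (subst sum.swap) simp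
  finally show "laplacian (mult_lin x p) a = 2 * dir_deriv x p a + mult_lin x (laplacian p) a"
    by simp
qed

lemma euler_identity:
  "(\<Sum>i\<in>UNIV. mult_var i (deriv_var i p) a) = real (size a) * p (a :: 'v::finite multiset)"
proof -
  have "mult_var i (deriv_var i p) a = real (count a i) * p a" for i
    by (auto simp: mult_var_def deriv_var_def insert_DiffM not_in_iff)
  then show ?thesis
    by (simp add: size_eq_sum_count[of a] sum_distrib_right)
qed

lemma laplacian_mult_sqnorm:
  "laplacian (mult_sqnorm p)
     = (\<lambda>a. 2 * real CARD('v) * p a + 4 * real (size a) * p a + mult_sqnorm (laplacian p) a)"
  for p :: "'v::finite mpoly"
proof
  fix a :: "'v multiset"
  have "laplacian (mult_sqnorm p) a
      = (\<Sum>i\<in>UNIV. mult_sqnorm (deriv_var i (deriv_var i p)) a)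
        + 4 * (\<Sum>i\<in>UNIV. mult_var i (deriv_var i p) a) + 2 * real CARD('v) * p a"
    by (simp add: laplacian_def deriv_var_mult_sqnorm deriv_var_add deriv_var_scale
        deriv_var_mult_var sum.distrib sum_distrib_left)
  also have "(\<Sum>i\<in>UNIV. mult_sqnorm (deriv_var i (deriv_var i p)) a) = mult_sqnorm (laplacian p) a"
    unfolding mult_sqnorm_def laplacian_def mult_var_sum by (subst sum.swap) simp
  finally show "laplacian (mult_sqnorm p) a
      = 2 * real CARD('v) * p a + 4 * real (size a) * p a + mult_sqnorm (laplacian p) a"
    by (simp add: euler_identity)
qed

section \<open>Zonal harmonics\<close>

definition gegen_a :: "nat \<Rightarrow> nat \<Rightarrow> real" where
  "gegen_a n m = (2 * real m + real n - 2) / (real m + real n - 2)"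

definition gegen_b :: "nat \<Rightarrow> nat \<Rightarrow> real" where
  "gegen_b n m = real m / (real m + real n - 2)"

lemma gegen_Suc_Suc:
  "gegen n (Suc (Suc m)) t
     = gegen_a n (Suc m) * t * gegen n (Suc m) t - gegen_b n (Suc m) * gegen n m t"
  by (simp add: gegen_a_def gegen_b_def diff_divide_distrib)

lemma gegen_coeffs_1:
  assumes "n \<ge> 2" shows "2 * gegen_a n 1 - 2 * gegen_b n 1 = 2"
proof -
  have "2 * gegen_a n 1 - 2 * gegen_b n 1 = 2 * ((2 + real n - 2) - 1) / (1 + real n - 2)"
    by (simp add: gegen_a_def gegen_b_def diff_divide_distrib)
  also have "\<dots> = 2" using assms by (simp add: field_simps)
  finally show ?thesis .
qed

lemma gegen_coeffs_harmonic:
  "n \<ge> 2 \<Longrightarrow> 2 * real (Suc m) * gegen_a n (Suc m) = gegen_b n (Suc m) * (2 * real n + 4 * real m)"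
  by (simp add: gegen_a_def gegen_b_def field_simps)

lemma gegen_coeffs_deriv_a:
  assumes "n \<ge> 2"
  shows "gegen_a n (Suc (Suc m)) * gegen_a n (Suc m) + gegen_a n (Suc (Suc m)) * real (Suc (Suc m))
     - 2 * gegen_b n (Suc (Suc m)) = real (Suc (Suc (Suc m))) * gegen_a n (Suc m)"
proof -
  define A where "A = real m + real n"
  have "A \<noteq> 0" "A - 1 \<noteq> 0" using assms by (auto simp: A_def)
  moreover have e: "gegen_a n (Suc (Suc m)) = (A + m + 2) / A"
    "gegen_a n (Suc m) = (A + m) / (A - 1)"
    "gegen_b n (Suc (Suc m)) = (m + 2) / A"
    by (simp_all add: gegen_a_def gegen_b_def A_def algebra_simps)
  ultimately show ?thesis unfolding e by (simp add: field_simps)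
qed

lemma gegen_coeffs_deriv_b:
  assumes "n \<ge> 2"
  shows "gegen_a n (Suc (Suc m)) * gegen_b n (Suc m) + gegen_b n (Suc (Suc m)) * real (Suc m)
     = real (Suc (Suc (Suc m))) * gegen_b n (Suc m)"
proof -
  define A where "A = real m + real n"
  have "A \<noteq> 0" "A - 1 \<noteq> 0" using assms by (auto simp: A_def)
  moreover have e: "gegen_a n (Suc (Suc m)) = (A + m + 2) / A"
    "gegen_b n (Suc m) = (m + 1) / (A - 1)"
    "gegen_b n (Suc (Suc m)) = (m + 2) / A"
    by (simp_all add: gegen_a_def gegen_b_def A_def algebra_simps)
  ultimately show ?thesis unfolding e by (simp add: field_simps)
qed

text \<open>The three-term recurrence of \<^const>\<open>gegen\<close>, homogenised by \<open>|X|\<^sup>2\<close>: at a unit vector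
  \<open>y\<close> the polynomial \<open>zonal x m\<close> takes the value \<open>gegen n m (x \<bullet> y)\<close>.\<close>
fun zonal :: "real^'n \<Rightarrow> nat \<Rightarrow> 'n::finite mpoly" where
  "zonal x 0 = const_one"
| "zonal x (Suc 0) = mult_lin x const_one"
| "zonal x (Suc (Suc m)) = (\<lambda>a. gegen_a CARD('n) (Suc m) * mult_lin x (zonal x (Suc m)) a
                                 - gegen_b CARD('n) (Suc m) * mult_sqnorm (zonal x m) a)"

lemma homogeneous_zonal: "homogeneous m (zonal x m)"
proof (induction m rule: induct_nat_012)
  case 0
  show ?case by (simp add: homogeneous_const_one)
next
  case 1
  show ?case by (simp add: homogeneous_const_one homogeneous_mult_lin)
next
  case (ge2 m)
  have "homogeneous (Suc (Suc m)) (mult_lin x (zonal x (Suc m)))"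
    and "homogeneous (Suc (Suc m)) (mult_sqnorm (zonal x m))"
    using ge2 by (simp_all add: homogeneous_mult_lin homogeneous_mult_sqnorm)
  then show ?case by (simp add: homogeneous_def)
qed

lemma dir_deriv_zonal:
  fixes x :: "real^'n::finite"
  assumes n: "CARD('n) \<ge> 2" and x: "x \<bullet> x = 1"
  shows "dir_deriv x (zonal x (Suc m)) = (\<lambda>a. real (Suc m) * zonal x m a)"
proof (induction m rule: induct_nat_012)
  case 0
  show ?case by (simp add: dir_deriv_mult_lin dir_deriv_const_one mult_lin_zero x)
next
  case 1
  show ?case
  proof
    fix a
    have "dir_deriv x (zonal x (Suc (Suc 0))) a
        = gegen_a CARD('n) 1 * (zonal x 1 a + zonal x 1 a) - gegen_b CARD('n) 1 * (2 * zonal x 1 a)"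
      by (simp add: dir_deriv_lincomb dir_deriv_mult_lin dir_deriv_mult_sqnorm x dir_deriv_const_one
          mult_sqnorm_zero mult_lin_zero)
    also have "\<dots> = (2 * gegen_a CARD('n) 1 - 2 * gegen_b CARD('n) 1) * zonal x 1 a"
      by (simp add: algebra_simps)
    finally show "dir_deriv x (zonal x (Suc (Suc 0))) a = real (Suc (Suc 0)) * zonal x (Suc 0) a"
      using gegen_coeffs_1[OF n] by simp
  qed
next
  case (ge2 m)
  show ?case
  proof
    fix a
    let ?A = "mult_lin x (zonal x (Suc m)) a" and ?B = "mult_sqnorm (zonal x m) a"
    let ?a = "gegen_a CARD('n) (Suc m)" and ?b = "gegen_b CARD('n) (Suc m)"
    let ?a' = "gegen_a CARD('n) (Suc (Suc m))" and ?b' = "gegen_b CARD('n) (Suc (Suc m))"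
    have zonal2: "zonal x (Suc (Suc m)) a = ?a * ?A - ?b * ?B"
      by simp
    have "dir_deriv x (zonal x (Suc (Suc (Suc m)))) a
        = ?a' * (zonal x (Suc (Suc m)) a + real (Suc (Suc m)) * ?A)
          - ?b' * (2 * ?A + real (Suc m) * ?B)"
      unfolding zonal.simps(3)[of x "Suc m"] dir_deriv_lincomb dir_deriv_mult_lin
        dir_deriv_mult_sqnorm ge2 x mult_lin_scale mult_sqnorm_scale
      by (simp del: zonal.simps)
    also have "\<dots> = (?a' * ?a + ?a' * real (Suc (Suc m)) - 2 * ?b') * ?A
                     - (?a' * ?b + ?b' * real (Suc m)) * ?B"
      by (simp only: zonal2 algebra_simps)
    also have "\<dots> = real (Suc (Suc (Suc m))) * ?a * ?A - real (Suc (Suc (Suc m))) * ?b * ?B"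
      by (simp only: gegen_coeffs_deriv_a[OF n] gegen_coeffs_deriv_b[OF n])
    also have "\<dots> = real (Suc (Suc (Suc m))) * zonal x (Suc (Suc m)) a"
      by (simp only: zonal2 algebra_simps)
    finally show "dir_deriv x (zonal x (Suc (Suc (Suc m)))) a
        = real (Suc (Suc (Suc m))) * zonal x (Suc (Suc m)) a" .
  qed
qed

lemma laplacian_zonal:
  fixes x :: "real^'n::finite"
  assumes n: "CARD('n) \<ge> 2" and x: "x \<bullet> x = 1"
  shows "laplacian (zonal x m) = (\<lambda>a. 0)"
proof (induction m rule: induct_nat_012)
  case 0
  show ?case by (simp add: laplacian_const_one)
next
  case 1
  show ?case by (simp add: laplacian_mult_lin dir_deriv_const_one laplacian_const_one mult_lin_zero)
next
  case (ge2 m)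
  show ?case
  proof
    fix a
    have "laplacian (zonal x (Suc (Suc m))) a
        = (2 * real (Suc m) * gegen_a CARD('n) (Suc m)
           - gegen_b CARD('n) (Suc m) * (2 * real CARD('n) + 4 * real (size a))) * zonal x m a"
      by (simp only: zonal.simps(3) laplacian_lincomb laplacian_mult_lin laplacian_mult_sqnorm
          dir_deriv_zonal[OF n x] ge2 mult_lin_zero mult_sqnorm_zero) (simp add: algebra_simps)
    also have "\<dots> = 0"
      using homogeneous_zonal[of m x] gegen_coeffs_harmonic[OF n, of m]
      by (cases "size a = m") (auto simp: homogeneous_def)
    finally show "laplacian (zonal x (Suc (Suc m))) a = 0" .
  qed
qed

fun zonal_lead :: "nat \<Rightarrow> nat \<Rightarrow> real" where
  "zonal_lead n 0 = 1"
| "zonal_lead n (Suc 0) = 1"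
| "zonal_lead n (Suc (Suc m)) = gegen_a n (Suc m) * zonal_lead n (Suc m)"

lemma zonal_lead_pos: "n \<ge> 2 \<Longrightarrow> zonal_lead n m > 0"
proof (induction n m rule: zonal_lead.induct)
  case (3 n m)
  then have "gegen_a n (Suc m) > 0" by (auto simp: gegen_a_def intro!: divide_pos_pos)
  then show ?case using 3 by simp
qed auto

primrec lin_power :: "real^'n \<Rightarrow> nat \<Rightarrow> 'n::finite mpoly" where
  "lin_power y 0 = const_one"
| "lin_power y (Suc k) = mult_lin y (lin_power y k)"

lemma zonal_eq_lin_power_plus_mult_sqnorm:
  "\<exists>R. zonal x m = (\<lambda>a. zonal_lead CARD('n) m * lin_power x m a + mult_sqnorm R a)"
  for x :: "real^'n::finite"
proof (induction m rule: induct_nat_012)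
  case (ge2 m)
  then obtain R where R: "zonal x (Suc m)
      = (\<lambda>a. zonal_lead CARD('n) (Suc m) * lin_power x (Suc m) a + mult_sqnorm R a)"
    by blast
  let ?R = "\<lambda>b. gegen_a CARD('n) (Suc m) * mult_lin x R b - gegen_b CARD('n) (Suc m) * zonal x m b"
  have "zonal x (Suc (Suc m))
      = (\<lambda>a. zonal_lead CARD('n) (Suc (Suc m)) * lin_power x (Suc (Suc m)) a + mult_sqnorm ?R a)"
    by (simp only: zonal.simps R mult_lin_lincomb[where v = 1, simplified] mult_lin_mult_sqnorm
        mult_sqnorm_lincomb lin_power.simps zonal_lead.simps) (simp add: algebra_simps)
  then show ?case by blast
qed (auto intro!: exI[of _ "\<lambda>a. 0"] simp: mult_sqnorm_zero)

section \<open>The Fischer inner product\<close>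

definition mset_fact :: "'n::finite multiset \<Rightarrow> real" where
  "mset_fact a = (\<Prod>i\<in>UNIV. fact (count a i))"

definition monomial :: "real^'n::finite \<Rightarrow> 'n multiset \<Rightarrow> real" where
  "monomial y a = (\<Prod>i\<in>UNIV. (y$i) ^ count a i)"

definition fischer :: "nat \<Rightarrow> 'n::finite mpoly \<Rightarrow> 'n mpoly \<Rightarrow> real" where
  "fischer k p q = (\<Sum>a | size a = k. mset_fact a * p a * q a)"

definition eval_hom :: "nat \<Rightarrow> 'n::finite mpoly \<Rightarrow> real^'n \<Rightarrow> real" where
  "eval_hom k p y = (\<Sum>a | size a = k. p a * monomial y a)"

lemma finite_size_eq [simp]: "finite {a :: 'v::finite multiset. size a = k}"
proof -
  have "{a :: 'v multiset. size a = k} = multisets_of_size UNIV k"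
    by (auto simp: multisets_of_size_def)
  then show ?thesis by auto
qed

lemma sum_size_Suc_add_mset:
  "(\<Sum>b | size b = Suc k. if i \<in># b then h b else 0) = (\<Sum>a | size a = k. h (add_mset i a) :: real)"
  for i :: "'v::finite"
proof -
  have "(\<Sum>b | size b = Suc k. if i \<in># b then h b else 0)
      = (\<Sum>b\<in>{b\<in>{b. size b = Suc k}. i \<in># b}. h b)"
    by (rule sum.inter_filter[symmetric]) simp
  also have "{b\<in>{b. size b = Suc k}. i \<in># b} = add_mset i ` {a. size a = k}"
  proof (rule set_eqI, rule iffI)
    fix b assume "b \<in> {b\<in>{b. size b = Suc k}. i \<in># b}"
    then have "b = add_mset i (b - {#i#})" "size (b - {#i#}) = k"
      by (auto simp: size_Diff_singleton)
    then show "b \<in> add_mset i ` {a. size a = k}" by blast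
  qed auto
  also have "(\<Sum>b\<in>add_mset i ` {a. size a = k}. h b) = (\<Sum>a | size a = k. h (add_mset i a))"
    by (subst sum.reindex) (auto simp: inj_on_def)
  finally show ?thesis .
qed

lemma prod_UNIV_update:
  fixes f g :: "'v::finite \<Rightarrow> real"
  assumes "\<And>j. j \<noteq> i \<Longrightarrow> g j = f j"
  shows "(\<Prod>j\<in>UNIV. g j) = g i * (\<Prod>j\<in>UNIV - {i}. f j)"
proof -
  have "(\<Prod>j\<in>UNIV. g j) = g i * (\<Prod>j\<in>UNIV - {i}. g j)"
    by (simp add: prod.remove)
  also have "(\<Prod>j\<in>UNIV - {i}. g j) = (\<Prod>j\<in>UNIV - {i}. f j)"
    by (rule prod.cong) (auto simp: assms)
  finally show ?thesis .
qed

lemma mset_fact_add_mset: "mset_fact (add_mset i a) = real (count a i + 1) * mset_fact a"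
proof -
  have "mset_fact (add_mset i a) = fact (count a i + 1) * (\<Prod>j\<in>UNIV - {i}. fact (count a j))"
    and "mset_fact a = fact (count a i) * (\<Prod>j\<in>UNIV - {i}. fact (count a j))"
    unfolding mset_fact_def by (subst prod_UNIV_update[where f = "\<lambda>j. fact (count a j)"], auto)+
  then show ?thesis by (simp add: algebra_simps)
qed

lemma monomial_add_mset: "monomial y (add_mset i a) = y$i * monomial y a"
proof -
  have "monomial y (add_mset i a) = (y$i) ^ (count a i + 1) * (\<Prod>j\<in>UNIV - {i}. (y$j) ^ count a j)"
    and "monomial y a = (y$i) ^ count a i * (\<Prod>j\<in>UNIV - {i}. (y$j) ^ count a j)"
    unfolding monomial_def by (subst prod_UNIV_update[where f = "\<lambda>j. (y$j) ^ count a j"], auto)+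
  then show ?thesis by (simp add: algebra_simps)
qed

lemma mset_fact_pos: "mset_fact a > 0"
  by (simp add: mset_fact_def prod_pos)

lemma fischer_commute: "fischer k p q = fischer k q p"
  by (simp add: fischer_def mult_ac)

lemma fischer_mult_var: "fischer (Suc k) (mult_var i p) q = fischer k p (deriv_var i q)"
proof -
  have "fischer (Suc k) (mult_var i p) q
      = (\<Sum>b | size b = Suc k. if i \<in># b then mset_fact b * p (b - {#i#}) * q b else 0)"
    unfolding fischer_def by (rule sum.cong) (auto simp: mult_var_def)
  also have "\<dots> = (\<Sum>a | size a = k. mset_fact (add_mset i a) * p a * q (add_mset i a))"
    by (simp add: sum_size_Suc_add_mset)
  also have "\<dots> = fischer k p (deriv_var i q)"
    unfolding fischer_def deriv_var_def mset_fact_add_mset by (simp add: mult_ac)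
  finally show ?thesis .
qed

lemma fischer_mult_lin: "fischer (Suc k) p (mult_lin y q) = fischer k (dir_deriv y p) q"
proof -
  have "fischer (Suc k) p (mult_lin y q) = (\<Sum>i\<in>UNIV. y$i * fischer (Suc k) (mult_var i q) p)"
    unfolding fischer_def mult_lin_def sum_distrib_left by (subst sum.swap) (simp add: mult_ac)
  also have "\<dots> = (\<Sum>i\<in>UNIV. y$i * fischer k q (deriv_var i p))"
    by (simp add: fischer_mult_var)
  also have "\<dots> = fischer k (dir_deriv y p) q"
    unfolding fischer_def dir_deriv_def sum_distrib_left sum_distrib_right
    by (subst sum.swap) (simp add: mult_ac)
  finally show ?thesis .
qed

lemma fischer_mult_sqnorm: "fischer (Suc (Suc k)) p (mult_sqnorm q) = fischer k (laplacian p) q"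
proof -
  have "fischer (Suc (Suc k)) p (mult_sqnorm q)
      = (\<Sum>i\<in>UNIV. fischer (Suc (Suc k)) (mult_var i (mult_var i q)) p)"
    unfolding fischer_def mult_sqnorm_def sum_distrib_left by (subst sum.swap) (simp add: mult_ac)
  also have "\<dots> = (\<Sum>i\<in>UNIV. fischer k q (deriv_var i (deriv_var i p)))"
    by (simp add: fischer_mult_var fischer_commute[of "Suc k"])
  also have "\<dots> = fischer k (laplacian p) q"
    unfolding fischer_def laplacian_def sum_distrib_left sum_distrib_right
    by (subst sum.swap) (simp add: mult_ac)
  finally show ?thesis .
qed

lemma mult_sqnorm_eq_0_if_size_less_2:
  assumes "size a < 2" shows "mult_sqnorm p a = 0"
proof -
  have "mult_var i (mult_var i p) a = 0" for i
  proof (cases "i \<in># a")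
    case True
    then obtain b where b: "a = add_mset i b" by (metis multi_member_split)
    with assms have "i \<notin># b" by (cases b) auto
    with b show ?thesis by (simp add: mult_var_def)
  qed (simp add: mult_var_def)
  then show ?thesis by (simp add: mult_sqnorm_def)
qed

lemma eval_hom_mult_var: "eval_hom (Suc k) (mult_var i p) y = y$i * eval_hom k p y"
proof -
  have "eval_hom (Suc k) (mult_var i p) y
      = (\<Sum>b | size b = Suc k. if i \<in># b then p (b - {#i#}) * monomial y b else 0)"
    unfolding eval_hom_def by (rule sum.cong) (auto simp: mult_var_def)
  also have "\<dots> = (\<Sum>a | size a = k. p a * monomial y (add_mset i a))"
    by (simp add: sum_size_Suc_add_mset)
  finally show ?thesis by (simp add: monomial_add_mset eval_hom_def sum_distrib_left mult_ac)
qed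

lemma eval_hom_mult_lin: "eval_hom (Suc k) (mult_lin x p) y = (x \<bullet> y) * eval_hom k p y"
proof -
  have "eval_hom (Suc k) (mult_lin x p) y = (\<Sum>i\<in>UNIV. x$i * eval_hom (Suc k) (mult_var i p) y)"
    unfolding eval_hom_def mult_lin_def sum_distrib_left sum_distrib_right
    by (subst sum.swap) (simp add: mult_ac)
  then show ?thesis
    by (simp add: eval_hom_mult_var inner_vec_def sum_distrib_left sum_distrib_right mult_ac)
qed

lemma eval_hom_mult_sqnorm: "eval_hom (Suc (Suc k)) (mult_sqnorm p) y = (y \<bullet> y) * eval_hom k p y"
proof -
  have "eval_hom (Suc (Suc k)) (mult_sqnorm p) y
      = (\<Sum>i\<in>UNIV. eval_hom (Suc (Suc k)) (mult_var i (mult_var i p)) y)"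
    unfolding eval_hom_def mult_sqnorm_def sum_distrib_right by (subst sum.swap) simp
  then show ?thesis
    by (simp add: eval_hom_mult_var inner_vec_def sum_distrib_left sum_distrib_right mult_ac)
qed

lemma eval_hom_lincomb:
  "eval_hom k (\<lambda>a. u * f a - v * g a) y = u * eval_hom k f y - v * eval_hom k g y"
  by (simp add: eval_hom_def sum_distrib_left sum_subtractf algebra_simps)

lemma eval_hom_const_one: "eval_hom 0 const_one y = 1"
  by (simp add: eval_hom_def const_one_def monomial_def)

lemma eval_hom_dir_deriv: "eval_hom k (dir_deriv y p) y = real (Suc k) * eval_hom (Suc k) p y"
proof -
  have "eval_hom k (dir_deriv y p) y
      = (\<Sum>i\<in>UNIV. \<Sum>a | size a = k.
           real (count (add_mset i a) i) * p (add_mset i a) * monomial y (add_mset i a))"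
    unfolding eval_hom_def dir_deriv_def deriv_var_def sum_distrib_right
    by (subst sum.swap) (simp add: monomial_add_mset mult_ac)
  also have "\<dots> = (\<Sum>i\<in>UNIV. \<Sum>b | size b = Suc k.
                     if i \<in># b then real (count b i) * p b * monomial y b else 0)"
    by (simp add: sum_size_Suc_add_mset)
  also have "\<dots> = (\<Sum>i\<in>UNIV. \<Sum>b | size b = Suc k. real (count b i) * p b * monomial y b)"
    by (intro sum.cong refl) (auto simp: not_in_iff)
  also have "\<dots> = (\<Sum>b | size b = Suc k. real (size b) * p b * monomial y b)"
  proof -
    have "(\<Sum>i\<in>UNIV. real (count b i) * p b * monomial y b)
        = real (size b) * p b * monomial y b" for b
      by (simp add: size_eq_sum_count[of b] sum_distrib_right)
    then show ?thesis by (subst sum.swap) simp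
  qed
  also have "\<dots> = real (Suc k) * eval_hom (Suc k) p y"
    by (simp add: eval_hom_def sum_distrib_left mult_ac)
  finally show ?thesis .
qed

lemma fischer_lin_power: "fischer k p (lin_power y k) = fact k * eval_hom k p y"
proof (induction k arbitrary: p)
  case 0
  then show ?case by (simp add: fischer_def eval_hom_def const_one_def mset_fact_def monomial_def)
next
  case (Suc k)
  then show ?case by (simp add: fischer_mult_lin eval_hom_dir_deriv)
qed

lemma eval_hom_zonal:
  fixes x y :: "real^'n::finite"
  assumes "y \<bullet> y = 1"
  shows "eval_hom m (zonal x m) y = gegen CARD('n) m (x \<bullet> y)"
proof (induction m rule: induct_nat_012)
  case (ge2 m)
  then show ?case
    by (simp only: zonal.simps eval_hom_lincomb eval_hom_mult_lin eval_hom_mult_sqnorm assms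
        gegen_Suc_Suc mult_1)
qed (simp_all add: eval_hom_const_one eval_hom_mult_lin)

text \<open>Of the decomposition of \<open>zonal y m\<close>, the \<open>|X|\<^sup>2\<close>-part is orthogonal to the
  harmonic \<open>zonal x m\<close>, and the power of \<open>\<langle>y,X\<rangle>\<close> reproduces the value at \<open>y\<close>.\<close>
lemma fischer_zonal:
  fixes x y :: "real^'n::finite"
  assumes n: "CARD('n) \<ge> 2" and x: "x \<bullet> x = 1" and y: "y \<bullet> y = 1"
  shows "fischer m (zonal x m) (zonal y m)
           = zonal_lead CARD('n) m * fact m * gegen CARD('n) m (x \<bullet> y)"
proof -
  obtain R where R: "zonal y m = (\<lambda>a. zonal_lead CARD('n) m * lin_power y m a + mult_sqnorm R a)"
    using zonal_eq_lin_power_plus_mult_sqnorm by blast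
  have "fischer m (zonal x m) (zonal y m)
      = zonal_lead CARD('n) m * fischer m (zonal x m) (lin_power y m)
        + fischer m (zonal x m) (mult_sqnorm R)"
    unfolding R fischer_def by (simp add: sum_distrib_left sum.distrib algebra_simps)
  also have "fischer m (zonal x m) (mult_sqnorm R) = 0"
  proof (cases "m < 2")
    case True
    then show ?thesis by (simp add: fischer_def mult_sqnorm_eq_0_if_size_less_2)
  next
    case False
    then obtain k where "m = Suc (Suc k)" by (metis add_2_eq_Suc le_Suc_ex not_less)
    then show ?thesis
      by (simp only: fischer_mult_sqnorm laplacian_zonal[OF n x]) (simp add: fischer_def)
  qed
  also have "fischer m (zonal x m) (lin_power y m) = fact m * gegen CARD('n) m (x \<bullet> y)"
    by (simp add: fischer_lin_power eval_hom_zonal[OF y])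
  finally show ?thesis by simp
qed

section \<open>Delsarte's linear programming bound\<close>

lemma gegen_positive_definite:
  fixes y :: "nat \<Rightarrow> real^'n::finite"
  assumes n: "CARD('n) \<ge> 2" and y: "\<And>i. i < N \<Longrightarrow> y i \<bullet> y i = 1"
  shows "(\<Sum>i<N. \<Sum>j<N. gegen CARD('n) m (y i \<bullet> y j)) \<ge> 0"
proof -
  define c where "c = zonal_lead CARD('n) m * fact m"
  have "c > 0" using zonal_lead_pos[OF n] by (simp add: c_def)
  have zonal: "fischer m (zonal (y i) m) (zonal (y j) m) = c * gegen CARD('n) m (y i \<bullet> y j)"
    if "i < N" "j < N" for i j
    using fischer_zonal[OF n y[OF that(1)] y[OF that(2)]] by (simp add: c_def)
  have "c * (\<Sum>i<N. \<Sum>j<N. gegen CARD('n) m (y i \<bullet> y j))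
      = (\<Sum>i<N. \<Sum>j<N. fischer m (zonal (y i) m) (zonal (y j) m))"
    unfolding sum_distrib_left using zonal by (intro sum.cong refl) simp
  also have "\<dots> = (\<Sum>a | size a = m. mset_fact a * (\<Sum>i<N. zonal (y i) m a)\<^sup>2)"
    unfolding fischer_def power2_eq_square sum_distrib_left sum_distrib_right
    by (subst sum.swap, rule sum.cong[OF refl], subst sum.swap) (simp add: mult_ac)
  also have "\<dots> \<ge> 0"
    by (intro sum_nonneg mult_nonneg_nonneg) (auto simp: mset_fact_pos less_imp_le)
  finally show ?thesis using \<open>c > 0\<close> by (simp add: zero_le_mult_iff)
qed

lemma sum_sum_split_diagonal:
  fixes h :: "nat \<Rightarrow> nat \<Rightarrow> 'a::comm_monoid_add"
  shows "(\<Sum>i<N. \<Sum>j<N. h i j) = (\<Sum>i<N. h i i) + (\<Sum>i<N. \<Sum>j\<in>{..<N} - {i}. h i j)"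
proof -
  have "(\<Sum>j<N. h i j) = h i i + (\<Sum>j\<in>{..<N} - {i}. h i j)" if "i < N" for i
    using that by (simp add: sum.remove)
  then show ?thesis by (simp add: sum.distrib)
qed

lemma sum_sum_nonpos_eq_0:
  fixes g :: "'a \<Rightarrow> 'b \<Rightarrow> real"
  assumes "finite A" "\<And>i. finite (B i)"
    and nonpos: "\<And>i j. i \<in> A \<Longrightarrow> j \<in> B i \<Longrightarrow> g i j \<le> 0"
    and "(\<Sum>i\<in>A. \<Sum>j\<in>B i. g i j) \<ge> 0"
    and "i \<in> A" "j \<in> B i"
  shows "g i j = 0"
proof -
  have inner: "(\<Sum>j\<in>B i. - g i j) \<ge> 0" if "i \<in> A" for i
    using nonpos that by (intro sum_nonneg) auto
  have "(\<Sum>i\<in>A. \<Sum>j\<in>B i. g i j) \<le> 0"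
    using nonpos by (intro sum_nonpos) auto
  then have "(\<Sum>i\<in>A. \<Sum>j\<in>B i. - g i j) = 0"
    using assms(4) by (simp add: sum_negf)
  then have "\<forall>i\<in>A. (\<Sum>j\<in>B i. - g i j) = 0"
    using sum_nonneg_eq_0_iff[OF assms(1), of "\<lambda>i. \<Sum>j\<in>B i. - g i j"] inner by blast
  then have "(\<Sum>j\<in>B i. - g i j) = 0"
    using \<open>i \<in> A\<close> by blast
  moreover have "\<forall>j\<in>B i. - g i j \<ge> 0"
    using nonpos \<open>i \<in> A\<close> by auto
  ultimately show ?thesis
    using sum_nonneg_eq_0_iff[OF assms(2)[of i], of "\<lambda>j. - g i j"] \<open>j \<in> B i\<close> by auto
qed

lemma delsarte_inequality:
  fixes y :: "nat \<Rightarrow> real^'n::finite"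
  assumes n: "CARD('n) \<ge> 2" and y: "\<And>i. i < N \<Longrightarrow> norm (y i) = 1"
    and c: "\<forall>i\<in>{1..k}. c i \<ge> 0"
  shows "(\<Sum>i<N. \<Sum>j\<in>{..<N} - {i}. gpoly CARD('n) k c (y i \<bullet> y j))
           \<ge> real N * (c 0 * real N - gpoly CARD('n) k c 1)"
proof -
  have y1: "y i \<bullet> y i = 1" if "i < N" for i
    using y[OF that] by (simp add: norm_eq_1)
  let ?S = "\<lambda>l. \<Sum>i<N. \<Sum>j<N. gegen CARD('n) l (y i \<bullet> y j)"
  have "(\<Sum>l\<in>{1..k}. c l * ?S l) \<ge> 0"
  proof (rule sum_nonneg)
    fix l assume "l \<in> {1..k}"
    then show "0 \<le> c l * ?S l"
      using c gegen_positive_definite[where y = y and N = N, OF n y1] by simp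
  qed
  then have "c 0 * (real N * real N) \<le> c 0 * ?S 0 + (\<Sum>l\<in>{1..k}. c l * ?S l)"
    by simp
  also have "\<dots> = (\<Sum>l\<le>k. c l * ?S l)"
    by (simp add: atMost_atLeast0 sum.atLeast_Suc_atMost)
  also have "\<dots> = (\<Sum>i<N. \<Sum>j<N. gpoly CARD('n) k c (y i \<bullet> y j))"
    unfolding gpoly_def sum_distrib_left
    by (subst sum.swap, rule sum.cong[OF refl], subst sum.swap) simp
  also have "\<dots> = real N * gpoly CARD('n) k c 1
                   + (\<Sum>i<N. \<Sum>j\<in>{..<N} - {i}. gpoly CARD('n) k c (y i \<bullet> y j))"
    by (simp add: sum_sum_split_diagonal[of _ N] y1)
  finally show ?thesis by (simp add: algebra_simps)
qed

lemma delsarte_lp_bound: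
  fixes y :: "nat \<Rightarrow> real^'n::finite"
  assumes n: "CARD('n) \<ge> 2" and "N > 0" and y: "\<And>i. i < N \<Longrightarrow> norm (y i) = 1"
    and c0: "c 0 > 0" and c: "\<forall>i\<in>{1..k}. c i \<ge> 0"
    and nonpos: "\<And>i j. i < N \<Longrightarrow> j < N \<Longrightarrow> i \<noteq> j \<Longrightarrow> gpoly CARD('n) k c (y i \<bullet> y j) \<le> 0"
  shows "real N \<le> fsharp CARD('n) k c"
proof -
  have "(\<Sum>i<N. \<Sum>j\<in>{..<N} - {i}. gpoly CARD('n) k c (y i \<bullet> y j)) \<le> 0"
    using nonpos by (intro sum_nonpos) auto
  with delsarte_inequality[where y = y and N = N, OF n y c]
  have "real N * (c 0 * real N - gpoly CARD('n) k c 1) \<le> 0"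
    by linarith
  with \<open>N > 0\<close> have "c 0 * real N \<le> gpoly CARD('n) k c 1"
    by (simp add: mult_le_0_iff)
  with c0 show ?thesis by (simp add: fsharp_def field_simps)
qed

lemma delsarte_lp_bound_tight:
  fixes y :: "nat \<Rightarrow> real^'n::finite"
  assumes n: "CARD('n) \<ge> 2" and y: "\<And>i. i < N \<Longrightarrow> norm (y i) = 1"
    and c0: "c 0 > 0" and c: "\<forall>i\<in>{1..k}. c i \<ge> 0"
    and nonpos: "\<And>i j. i < N \<Longrightarrow> j < N \<Longrightarrow> i \<noteq> j \<Longrightarrow> gpoly CARD('n) k c (y i \<bullet> y j) \<le> 0"
    and tight: "real N = fsharp CARD('n) k c"
    and ij: "i < N" "j < N" "i \<noteq> j"
  shows "gpoly CARD('n) k c (y i \<bullet> y j) = 0"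
proof -
  have "gpoly CARD('n) k c 1 = c 0 * real N"
    using tight c0 by (simp add: fsharp_def)
  then have "(\<Sum>i<N. \<Sum>j\<in>{..<N} - {i}. gpoly CARD('n) k c (y i \<bullet> y j)) \<ge> 0"
    using delsarte_inequality[where y = y and N = N, OF n y c] by simp
  then show ?thesis
    using sum_sum_nonpos_eq_0[of "{..<N}" "\<lambda>i. {..<N} - {i}" "\<lambda>i j. gpoly CARD('n) k c (y i \<bullet> y j)"]
      nonpos ij by auto
qed

lemma no_config_with_inner_products_below:
  fixes y :: "nat \<Rightarrow> real^'n::finite"
  assumes n: "CARD('n) \<ge> 2" and "N > 0" and y: "\<And>i. i < N \<Longrightarrow> norm (y i) = 1"
    and below: "\<And>i j. i < N \<Longrightarrow> j < N \<Longrightarrow> i \<noteq> j \<Longrightarrow> y i \<bullet> y j < \<tau>"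
    and f: "inP k1 \<tau> CARD('n) c" and f_tight: "real N = fsharp CARD('n) k1 c"
    and f_gap: "\<forall>t\<in>{t2<..<\<tau>}. gpoly CARD('n) k1 c t \<noteq> 0"
    and g: "inP K2 t2 CARD('n) e" and g_small: "real N > fsharp CARD('n) K2 e"
  shows False
proof -
  have ge: "y i \<bullet> y j \<ge> -1" if "i < N" "j < N" for i j
    using Cauchy_Schwarz_ineq2[of "y i" "y j"] y that by auto
  have f_zero: "gpoly CARD('n) k1 c (y i \<bullet> y j) = 0" if "i < N" "j < N" "i \<noteq> j" for i j
  proof (rule delsarte_lp_bound_tight[where y = y and N = N, OF n y _ _ _ f_tight that])
    show "c 0 > 0" "\<forall>i\<in>{1..k1}. c i \<ge> 0"
      using f by (auto simp: inP_def)
    show "gpoly CARD('n) k1 c (y i' \<bullet> y j') \<le> 0" if "i' < N" "j' < N" "i' \<noteq> j'" for i' j'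
      using f ge[OF that(1,2)] below[OF that] by (auto simp: inP_def)
  qed
  have "y i \<bullet> y j \<le> t2" if "i < N" "j < N" "i \<noteq> j" for i j
    using f_gap f_zero[OF that] below[OF that] by force
  then have "real N \<le> fsharp CARD('n) K2 e"
    using g ge by (intro delsarte_lp_bound[where y = y and N = N, OF n \<open>N > 0\<close> y])
      (auto simp: inP_def)
  with g_small show False by simp
qed

section \<open>Minimal distance and the Tammes number\<close>

lemma dist_sq_unit_vectors:
  fixes u w :: "'a::real_inner"
  assumes "norm u = 1" "norm w = 1"
  shows "(dist u w)\<^sup>2 = 2 - 2 * (u \<bullet> w)"
  using assms by (simp add: dist_norm power2_norm_eq_inner inner_diff_left inner_diff_right
      inner_commute norm_eq_1)

lemma inner_less_maxInner_if_dist_greater: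
  fixes C :: "'a::real_inner set"
  assumes C: "finite C" "C \<subseteq> sphere 0 1" "card C \<ge> 2"
    and uw: "norm u = 1" "norm w = 1" "dist u w > minDist C"
  shows "u \<bullet> w < maxInner C"
proof -
  let ?D = "{dist x y | x y. x \<in> C \<and> y \<in> C \<and> x \<noteq> y}"
  let ?I = "{x \<bullet> y | x y. x \<in> C \<and> y \<in> C \<and> x \<noteq> y}"
  have "finite ?D"
    by (rule finite_subset[of _ "(\<lambda>(x, y). dist x y) ` (C \<times> C)"]) (auto simp: C)
  have "finite ?I"
    by (rule finite_subset[of _ "(\<lambda>(x, y). x \<bullet> y) ` (C \<times> C)"]) (auto simp: C)
  have "\<not> card C \<le> Suc 0"
    using C by simp
  then have "?D \<noteq> {}"
    using card_le_Suc0_iff_eq[OF C(1)] by blast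
  then obtain x y where xy: "x \<in> C" "y \<in> C" "x \<noteq> y" "minDist C = dist x y"
    using Min_in[OF \<open>finite ?D\<close>] unfolding minDist_def by force
  then have "x \<bullet> y \<le> maxInner C"
    using \<open>finite ?I\<close> unfolding maxInner_def by (intro Max_ge) auto
  moreover have "(dist x y)\<^sup>2 < (dist u w)\<^sup>2"
    using uw xy by (intro power_strict_mono) auto
  ultimately show ?thesis
    using C xy by (simp add: dist_sq_unit_vectors uw subset_iff)
qed

lemma pairwise_dists_bij_betw:
  fixes h :: "nat \<Rightarrow> 'a::metric_space"
  assumes h: "bij_betw h {..<N} C"
  shows "{dist (h i) (h j) | i j. i < j \<and> j < N} = {dist x y | x y. x \<in> C \<and> y \<in> C \<and> x \<noteq> y}"
proof (rule set_eqI, rule iffI)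
  fix t assume "t \<in> {dist (h i) (h j) | i j. i < j \<and> j < N}"
  then obtain i j where t: "t = dist (h i) (h j)" and ij: "i < j" "j < N"
    by blast
  from ij have "i \<in> {..<N}" "j \<in> {..<N}" "i \<noteq> j"
    by auto
  then have "h i \<in> C" "h j \<in> C" "h i \<noteq> h j"
    using bij_betw_apply[OF h] inj_onD[OF bij_betw_imp_inj_on[OF h]] by blast+
  with t show "t \<in> {dist x y | x y. x \<in> C \<and> y \<in> C \<and> x \<noteq> y}"
    by blast
next
  fix t assume "t \<in> {dist x y | x y. x \<in> C \<and> y \<in> C \<and> x \<noteq> y}"
  then obtain x y where xy: "t = dist x y" "x \<in> C" "y \<in> C" "x \<noteq> y"
    by blast
  then obtain i j where "x = h i" "y = h j" "i < N" "j < N"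
    using bij_betw_imp_surj_on[OF h] by blast
  with xy have ij: "t = dist (h i) (h j)" "i < N" "j < N" "i \<noteq> j"
    by auto
  show "t \<in> {dist (h i) (h j) | i j. i < j \<and> j < N}"
  proof (cases "i < j")
    case False
    with ij have "t = dist (h j) (h i) \<and> j < i \<and> i < N" by (auto simp: dist_commute)
    then show ?thesis by blast
  qed (use ij in blast)
qed

lemma Min_pairwise_dist_le:
  fixes z :: "nat \<Rightarrow> 'a::metric_space"
  assumes "i < N" "j < N" "i \<noteq> j"
  shows "Min {dist (z i) (z j) | i j. i < j \<and> j < N} \<le> dist (z i) (z j)"
proof (rule Min_le)
  show "finite {dist (z i) (z j) | i j. i < j \<and> j < N}"
    by (rule finite_subset[of _ "(\<lambda>(i, j). dist (z i) (z j)) ` ({..<N} \<times> {..<N})"]) auto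
  show "dist (z i) (z j) \<in> {dist (z i) (z j) | i j. i < j \<and> j < N}"
  proof (cases "i < j")
    case False
    with assms have "dist (z i) (z j) = dist (z j) (z i) \<and> j < i \<and> i < N"
      by (auto simp: dist_commute)
    then show ?thesis by blast
  qed (use assms in blast)
qed

lemma tammes_d_eqI:
  fixes y :: "nat \<Rightarrow> real^'n::finite"
  assumes "\<forall>i<N. y i \<in> sphere 0 1"
    and "Min {dist (y i) (y j) | i j. i < j \<and> j < N} = d"
    and "\<And>z :: nat \<Rightarrow> real^'n. \<forall>i<N. z i \<in> sphere 0 1
           \<Longrightarrow> Min {dist (z i) (z j) | i j. i < j \<and> j < N} \<le> d"
  shows "tammes_d TYPE('n) N = d"
  unfolding tammes_d_def by (rule cSup_eq_maximum) (use assms in auto)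

theorem theorem3p1:
  fixes C :: "(real^'n) set" and N k1 K2 :: nat and c e :: "nat \<Rightarrow> real" and t2 :: real
  assumes "CARD('n) \<ge> 2" and "N \<ge> 2"
    and "finite C" and "card C = N" and "C \<subseteq> sphere 0 1"
    and "inP k1 (maxInner C) CARD('n) c" and "real N = fsharp CARD('n) k1 c"
    and "-1 \<le> t2" and "t2 < maxInner C"
    and "\<forall>t\<in>{t2<..<maxInner C}. gpoly CARD('n) k1 c t \<noteq> 0"
    and "inP K2 t2 CARD('n) e" and "real N > fsharp CARD('n) K2 e"
  shows "tammes_d TYPE('n) N = minDist C"
proof -
  obtain h where h: "bij_betw h {..<N} C"
    using ex_bij_betw_nat_finite[OF \<open>finite C\<close>] \<open>card C = N\<close> by (auto simp: atLeast0LessThan)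
  show ?thesis
  proof (rule tammes_d_eqI)
    show "\<forall>i<N. h i \<in> sphere 0 1"
      using h \<open>C \<subseteq> sphere 0 1\<close> by (auto simp: bij_betw_def)
    show "Min {dist (h i) (h j) | i j. i < j \<and> j < N} = minDist C"
      by (simp add: pairwise_dists_bij_betw[OF h] minDist_def)
  next
    fix z :: "nat \<Rightarrow> real^'n" assume z: "\<forall>i<N. z i \<in> sphere 0 1"
    show "Min {dist (z i) (z j) | i j. i < j \<and> j < N} \<le> minDist C"
    proof (rule ccontr)
      assume greater: "\<not> ?thesis"
      have unit: "norm (z i) = 1" if "i < N" for i
        using z that by simp
      have inner_below: "z i \<bullet> z j < maxInner C" if "i < N" "j < N" "i \<noteq> j" for i j
        using Min_pairwise_dist_le[OF that, of z] greater assms(2-5)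
        by (intro inner_less_maxInner_if_dist_greater unit that) auto
      show False
        by (rule no_config_with_inner_products_below[where y = z and N = N,
              OF assms(1) _ unit inner_below assms(6,7,10-12)])
          (use assms(2) in simp)
    qed
  qed
qed

end
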